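(* Let $m\ge 0$, $n=3m+2$, and $t\ge 1$. Then there is a homotopy equivalence $I(G_{n,t})\simeq I(G_{n,t}\setminus a_{t-1})$.
   Context: For a finite simple graph $G$, $I(G)$ is its independence complex (simplicial complex on $V(G)$ whose simplices are the independent sets); $G\setminus v$ is the induced subgraph on $V(G)\setminus\{v\}$. For integers $n\ge 2$, $t\ge 0$, the graph $G_{n,t}$ has vertex set $\{a_0,\dots,a_t\}\cup\{b_{i,j},c_{i,j}: 1\le i\le t,\ 1\le j\le n-1\}$, and its edges are exactly: $b_{i,j}\sim b_{i,j+1}$ and $c_{i,j}\sim c_{i,j+1}$ for $1\le i\le t$, $1\le j\le n-2$; $b_{i,n-1}\sim b_{i+1,1}$ and $c_{i,n-1}\sim c_{i+1,1}$ for $1\le i\le t-1$; and $a_{i-1}\sim b_{i,1}$, $a_{i-1}\sim c_{i,1}$, $a_i\sim b_{i,n-1}$, $a_i\sim c_{i,n-1}$ for $1\le i\le t$. *)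

theory Defs
  imports "HOL-Analysis.Analysis"
begin

text \<open>Finite simple graphs are given as a pair (vertex set, symmetric edge relation).\<close>
type_synonym 'a graph = "'a set \<times> ('a \<Rightarrow> 'a \<Rightarrow> bool)"

definition indep_complex :: "'a graph \<Rightarrow> 'a set set" where
  "indep_complex G = {S. S \<subseteq> fst G \<and> (\<forall>x\<in>S. \<forall>y\<in>S. \<not> snd G x y)}"

definition delete_vertex :: "'a graph \<Rightarrow> 'a \<Rightarrow> 'a graph" where
  "delete_vertex G v = (fst G - {v}, \<lambda>x y. x \<noteq> v \<and> y \<noteq> v \<and> snd G x y)"

definition geom_realization :: "'a set \<Rightarrow> 'a set set \<Rightarrow> ('a \<Rightarrow> real) topology" where
  "geom_realization V K = subtopology (powertop_real V)
     {f. f \<in> extensional V \<and> (\<forall>v\<in>V. 0 \<le> f v) \<and> {v\<in>V. f v \<noteq> 0} \<in> K \<and> sum f V = 1}"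

definition indep_space :: "'a graph \<Rightarrow> ('a \<Rightarrow> real) topology" where
  "indep_space G = geom_realization (fst G) (indep_complex G)"

datatype vert = A nat | B nat nat | C nat nat

definition Gverts :: "nat \<Rightarrow> nat \<Rightarrow> vert set" where
  "Gverts n t = {A i | i. i \<le> t}
     \<union> {B i j | i j. 1 \<le> i \<and> i \<le> t \<and> 1 \<le> j \<and> j \<le> n - 1}
     \<union> {C i j | i j. 1 \<le> i \<and> i \<le> t \<and> 1 \<le> j \<and> j \<le> n - 1}"

text \<open>The listed edges (one orientation each).\<close>
definition Gedge0 :: "nat \<Rightarrow> nat \<Rightarrow> vert \<Rightarrow> vert \<Rightarrow> bool" where
  "Gedge0 n t x y \<longleftrightarrow>
     (\<exists>i j. 1 \<le> i \<and> i \<le> t \<and> 1 \<le> j \<and> j \<le> n - 2 \<and>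
        ((x = B i j \<and> y = B i (j+1)) \<or> (x = C i j \<and> y = C i (j+1)))) \<or>
     (\<exists>i. 1 \<le> i \<and> i \<le> t - 1 \<and>
        ((x = B i (n-1) \<and> y = B (i+1) 1) \<or> (x = C i (n-1) \<and> y = C (i+1) 1))) \<or>
     (\<exists>i. 1 \<le> i \<and> i \<le> t \<and>
        ((x = A (i-1) \<and> y = B i 1) \<or> (x = A (i-1) \<and> y = C i 1) \<or>
         (x = A i \<and> y = B i (n-1)) \<or> (x = A i \<and> y = C i (n-1))))"

definition G :: "nat \<Rightarrow> nat \<Rightarrow> vert graph" where
  "G n t = (Gverts n t, \<lambda>x y. Gedge0 n t x y \<or> Gedge0 n t y x)"

end

theory Submission
  imports Defs
begin

(* The independence complex of a graph is the union of the complex with v deleted and the cone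
   from v over the link of v, which is the independence complex of G minus the closed
   neighbourhood N[v]; if this link is contractible, deleting v does not change the homotopy type.
   For v = a(t-1) in G(n,t), the graph G(n,t) - N[v] has the path
   b(t,2), ..., b(t,n-1), a(t), c(t,n-1), ..., c(t,2) on 2n - 3 = 3(2m) + 1 vertices as a connected
   component. In a path component q(1), ..., q(3M+1), the vertex q(3) dominates q(1): the only
   neighbour q(2) of q(1) is also a neighbour of q(3). So q(1) is an isolated vertex of the link of
   q(3), which is therefore a cone, and q(3) can be deleted; q(4), ..., q(3M+1) is a path component
   of what remains. Repeating this, we end with the isolated vertex q(3M+1), whose presence makes
   the independence complex of G(n,t) - N[v] a cone. *)

lemma continuous_map_cases_le3:
  assumes s: "continuous_map X euclideanreal s" and "a \<le> b"
    and f: "continuous_map (subtopology X {x. s x \<le> a}) Y f"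
    and g: "continuous_map (subtopology X {x. a \<le> s x \<and> s x \<le> b}) Y g"
    and h: "continuous_map (subtopology X {x. b \<le> s x}) Y h"
    and fg: "\<And>x. x \<in> topspace X \<Longrightarrow> s x = a \<Longrightarrow> f x = g x"
    and gh: "\<And>x. x \<in> topspace X \<Longrightarrow> s x = b \<Longrightarrow> g x = h x"
  shows "continuous_map X Y (\<lambda>x. if s x \<le> a then f x else if s x \<le> b then g x else h x)"
proof (rule continuous_map_cases_le[OF s continuous_map_const[THEN iffD2]])
  show "continuous_map (subtopology X {x \<in> topspace X. s x \<le> a}) Y f"
    by (rule continuous_map_from_subtopology_mono[OF f]) auto
  let ?X' = "subtopology X {x \<in> topspace X. a \<le> s x}"
  show "continuous_map ?X' Y (\<lambda>x. if s x \<le> b then g x else h x)"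
  proof (rule continuous_map_cases_le[OF continuous_map_from_subtopology[OF s] continuous_map_const[THEN iffD2]])
    show "continuous_map (subtopology ?X' {x \<in> topspace ?X'. s x \<le> b}) Y g"
      unfolding subtopology_subtopology by (rule continuous_map_from_subtopology_mono[OF g]) auto
    show "continuous_map (subtopology ?X' {x \<in> topspace ?X'. b \<le> s x}) Y h"
      unfolding subtopology_subtopology by (rule continuous_map_from_subtopology_mono[OF h]) auto
  qed (use gh in auto)
qed (use fg \<open>a \<le> b\<close> in auto)

lemma continuous_map_snd_subtopology:
  "continuous_map (subtopology (prod_topology T X) {z. snd z \<in> S}) (subtopology X S) snd"
  unfolding continuous_map_in_subtopology
  by (auto intro: continuous_map_from_subtopology continuous_map_snd)

lemma homotopic_with_trueI:
  assumes "continuous_map (prod_topology (top_of_set {0..1::real}) X) Y h"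
    and "\<And>x. x \<in> topspace X \<Longrightarrow> h (0, x) = f x" "\<And>x. x \<in> topspace X \<Longrightarrow> h (1, x) = g x"
  shows "homotopic_with (\<lambda>_. True) X Y f g"
  by (subst homotopic_with) (use assms in blast)+

definition independent_set :: "('a \<Rightarrow> 'a \<Rightarrow> bool) \<Rightarrow> 'a set \<Rightarrow> bool" where
  "independent_set E S \<longleftrightarrow> (\<forall>x\<in>S. \<forall>y\<in>S. \<not> E x y)"

definition simplex_point :: "'a set \<Rightarrow> ('a \<Rightarrow> real) \<Rightarrow> bool" where
  "simplex_point U f \<longleftrightarrow> f \<in> extensional U \<and> (\<forall>u\<in>U. 0 \<le> f u) \<and> sum f U = 1"

text \<open>Keeping \<open>U\<close>
  fixed makes the realizations of induced subgraphs subspaces of one another.\<close>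

definition realization_set :: "'a set \<Rightarrow> 'a set \<Rightarrow> ('a \<Rightarrow> 'a \<Rightarrow> bool) \<Rightarrow> ('a \<Rightarrow> real) set" where
  "realization_set U W E =
     {f. simplex_point U f \<and> support_on U f \<subseteq> W \<and> independent_set E (support_on U f)}"

definition realization :: "'a set \<Rightarrow> 'a set \<Rightarrow> ('a \<Rightarrow> 'a \<Rightarrow> bool) \<Rightarrow> ('a \<Rightarrow> real) topology" where
  "realization U W E = subtopology (powertop_real U) (realization_set U W E)"

lemma independent_set_subset: "independent_set E S \<Longrightarrow> T \<subseteq> S \<Longrightarrow> independent_set E T"
  unfolding independent_set_def by blast

lemma realization_set_extensional: "f \<in> realization_set U W E \<Longrightarrow> f \<in> extensional U"
  by (simp add: realization_set_def simplex_point_def)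

lemma realization_set_mono: "W \<subseteq> W' \<Longrightarrow> realization_set U W E \<subseteq> realization_set U W' E"
  by (auto simp: realization_set_def)

lemma realization_set_cong:
  "(\<And>x y. x \<in> W \<Longrightarrow> y \<in> W \<Longrightarrow> E x y = E' x y) \<Longrightarrow> realization_set U W E = realization_set U W E'"
  unfolding realization_set_def independent_set_def by (rule Collect_cong) blast

lemma realization_set_bounds:
  assumes "finite U" "f \<in> realization_set U W E" "u \<in> U"
  shows "0 \<le> f u" "f u \<le> 1"
proof -
  show "0 \<le> f u" using assms by (simp add: realization_set_def simplex_point_def)
  have "f u \<le> sum f U"
    using assms by (intro member_le_sum) (auto simp: realization_set_def simplex_point_def)
  then show "f u \<le> 1" using assms by (simp add: realization_set_def simplex_point_def)
qed

lemma topspace_realization [simp]: "topspace (realization U W E) = realization_set U W E"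
proof -
  have "realization_set U W E \<subseteq> extensional U"
    using realization_set_extensional by blast
  then show ?thesis
    unfolding realization_def topspace_subtopology topspace_product_topology_alt by auto
qed

lemma realization_subtopology:
  "W' \<subseteq> W \<Longrightarrow> realization U W' E = subtopology (realization U W E) (realization_set U W' E)"
  unfolding realization_def subtopology_subtopology
  using realization_set_mono[of W' W U E] by (simp add: Int_absorb1)

lemma indep_space_eq_realization: "indep_space H = realization (fst H) (fst H) (snd H)"
proof -
  have "{f. f \<in> extensional (fst H) \<and> (\<forall>v\<in>fst H. 0 \<le> f v) \<and>
            {v\<in>fst H. f v \<noteq> 0} \<in> indep_complex H \<and> sum f (fst H) = 1}
        = realization_set (fst H) (fst H) (snd H)"
    by (auto simp: realization_set_def simplex_point_def support_on_def indep_complex_def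
          independent_set_def)
  then show ?thesis
    by (simp add: indep_space_def geom_realization_def realization_def)
qed

lemma continuous_map_realization_apply:
  "continuous_map X (realization U W E) f \<Longrightarrow> u \<in> U \<Longrightarrow> continuous_map X euclideanreal (\<lambda>x. f x u)"
  unfolding realization_def continuous_map_in_subtopology continuous_map_componentwise by auto

lemma continuous_map_realization_coord:
  "u \<in> U \<Longrightarrow> continuous_map (realization U W E) euclideanreal (\<lambda>x. x u)"
  using continuous_map_realization_apply[OF continuous_map_id] by simp

lemma continuous_map_into_realization:
  assumes "\<And>u. u \<in> U \<Longrightarrow> continuous_map X euclideanreal (\<lambda>x. f x u)"
    and "\<And>x. x \<in> topspace X \<Longrightarrow> f x \<in> realization_set U W E"
  shows "continuous_map X (realization U W E) f"
  unfolding realization_def continuous_map_in_subtopology continuous_map_componentwise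
  using assms realization_set_extensional by blast

lemma continuous_map_realization_mono:
  "continuous_map X (realization U W E) f \<Longrightarrow> W \<subseteq> W' \<Longrightarrow> continuous_map X (realization U W' E) f"
  unfolding realization_def continuous_map_in_subtopology using realization_set_mono by blast

definition vertex_point :: "'a set \<Rightarrow> 'a \<Rightarrow> 'a \<Rightarrow> real" where
  "vertex_point U z = restrict (\<lambda>u. if u = z then 1 else 0) U"

lemma support_vertex_point: "z \<in> U \<Longrightarrow> support_on U (vertex_point U z) = {z}"
  by (auto simp: support_on_def vertex_point_def)

lemma vertex_point_in_realization:
  assumes "finite U" "W \<subseteq> U" "z \<in> W" "\<not> E z z"
  shows "vertex_point U z \<in> realization_set U W E"
proof -
  have "z \<in> U" using assms by auto
  then have "sum (vertex_point U z) U = 1" using assms by (simp add: vertex_point_def sum.If_cases)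
  then show ?thesis
    using assms \<open>z \<in> U\<close> support_vertex_point[of z U]
    by (auto simp: realization_set_def simplex_point_def vertex_point_def independent_set_def)
qed

definition convex_comb :: "'a set \<Rightarrow> real \<Rightarrow> ('a \<Rightarrow> real) \<Rightarrow> ('a \<Rightarrow> real) \<Rightarrow> 'a \<Rightarrow> real" where
  "convex_comb U a f g = restrict (\<lambda>u. (1 - a) * f u + a * g u) U"

lemma convex_comb_apply: "u \<in> U \<Longrightarrow> convex_comb U a f g u = (1 - a) * f u + a * g u"
  by (simp add: convex_comb_def)

lemma convex_comb_0: "f \<in> extensional U \<Longrightarrow> convex_comb U 0 f g = f"
  by (auto simp: convex_comb_def extensional_def)

lemma convex_comb_1: "g \<in> extensional U \<Longrightarrow> convex_comb U 1 f g = g"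
  by (auto simp: convex_comb_def extensional_def)

lemma convex_comb_in_realization:
  assumes "finite U" "f \<in> realization_set U Wf E" "g \<in> realization_set U Wg E" "0 \<le> a" "a \<le> 1"
    and "support_on U f \<union> support_on U g \<subseteq> W"
    and "independent_set E (support_on U f \<union> support_on U g)"
  shows "convex_comb U a f g \<in> realization_set U W E"
proof -
  have f: "simplex_point U f" and g: "simplex_point U g"
    using assms by (auto simp: realization_set_def)
  have "sum (convex_comb U a f g) U = (\<Sum>u\<in>U. (1 - a) * f u + a * g u)"
    by (rule sum.cong) (auto simp: convex_comb_apply)
  also have "\<dots> = (1 - a) * sum f U + a * sum g U"
    by (simp add: sum.distrib sum_distrib_left)
  finally have "simplex_point U (convex_comb U a f g)"
    using f g assms(4,5) by (auto simp: simplex_point_def convex_comb_def)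
  moreover have "support_on U (convex_comb U a f g) \<subseteq> support_on U f \<union> support_on U g"
    by (auto simp: support_on_def convex_comb_apply)
  ultimately show ?thesis
    using assms(6,7) by (auto simp: realization_set_def intro: independent_set_subset)
qed

lemma continuous_map_convex_comb:
  assumes "continuous_map X euclideanreal a"
    and "continuous_map X (realization U Wf E) f" "continuous_map X (realization U Wg E) g"
    and "\<And>x. x \<in> topspace X \<Longrightarrow> convex_comb U (a x) (f x) (g x) \<in> realization_set U W E"
  shows "continuous_map X (realization U W E) (\<lambda>x. convex_comb U (a x) (f x) (g x))"
proof (rule continuous_map_into_realization)
  fix u assume u: "u \<in> U"
  have "continuous_map X euclideanreal (\<lambda>x. (1 - a x) * f x u + a x * g x u)"
    using assms(1) continuous_map_realization_apply[OF assms(2) u]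
      continuous_map_realization_apply[OF assms(3) u]
    by (intro continuous_intros)
  then show "continuous_map X euclideanreal (\<lambda>x. convex_comb U (a x) (f x) (g x) u)"
    using u by (simp add: convex_comb_apply)
qed (use assms(4) in simp)

lemma homotopic_with_convex_comb:
  assumes "finite U"
    and f: "continuous_map X (realization U W E) f" and g: "continuous_map X (realization U W E) g"
    and indep: "\<And>x. x \<in> topspace X \<Longrightarrow> independent_set E (support_on U (f x) \<union> support_on U (g x))"
  shows "homotopic_with (\<lambda>_. True) X (realization U W E) f g"
proof -
  let ?T = "prod_topology (top_of_set {0..1::real}) X"
  let ?h = "\<lambda>z. convex_comb U (fst z) (f (snd z)) (g (snd z))"
  have cont: "continuous_map ?T (realization U W E) ?h"
  proof (rule continuous_map_convex_comb)
    show "continuous_map ?T euclideanreal fst"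
      using continuous_map_fst continuous_map_in_subtopology by blast
    show "continuous_map ?T (realization U W E) (\<lambda>z. f (snd z))"
      using continuous_map_compose[OF continuous_map_snd f] by (simp add: o_def)
    show "continuous_map ?T (realization U W E) (\<lambda>z. g (snd z))"
      using continuous_map_compose[OF continuous_map_snd g] by (simp add: o_def)
    fix z assume "z \<in> topspace ?T"
    then have z: "0 \<le> fst z" "fst z \<le> 1" "snd z \<in> topspace X"
      by (auto simp: mem_Times_iff)
    have fz: "f (snd z) \<in> realization_set U W E" and gz: "g (snd z) \<in> realization_set U W E"
      using continuous_map_image_subset_topspace[OF f] continuous_map_image_subset_topspace[OF g] z(3)
      by auto
    show "?h z \<in> realization_set U W E"
      by (rule convex_comb_in_realization[OF assms(1) fz gz z(1,2) _ indep[OF z(3)]])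
        (use fz gz in \<open>auto simp: realization_set_def\<close>)
  qed
  show ?thesis
  proof (rule homotopic_with_trueI[OF cont])
    fix x assume "x \<in> topspace X"
    then have "f x \<in> extensional U" "g x \<in> extensional U"
      using continuous_map_image_subset_topspace[OF f] continuous_map_image_subset_topspace[OF g]
      by (auto intro: realization_set_extensional)
    then show "?h (0, x) = f x" "?h (1, x) = g x" by (simp_all add: convex_comb_0 convex_comb_1)
  qed
qed

lemma contractible_realization_isolated_vertex:
  assumes "finite U" "W \<subseteq> U" "z \<in> W" and isolated: "\<And>x. x \<in> W \<Longrightarrow> \<not> E z x \<and> \<not> E x z"
  shows "contractible_space (realization U W E)"
proof -
  have z: "vertex_point U z \<in> realization_set U W E"
    using vertex_point_in_realization[OF assms(1-3)] isolated[OF assms(3)] by blast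
  have "homotopic_with (\<lambda>_. True) (realization U W E) (realization U W E) id (\<lambda>_. vertex_point U z)"
  proof (rule homotopic_with_convex_comb[OF assms(1)])
    show "continuous_map (realization U W E) (realization U W E) (\<lambda>_. vertex_point U z)"
      using z by simp
    fix x assume "x \<in> topspace (realization U W E)"
    have "z \<in> U" using assms(2,3) by blast
    from \<open>x \<in> _\<close> have "support_on U x \<subseteq> W" "independent_set E (support_on U x)"
      by (simp_all add: realization_set_def)
    then show "independent_set E (support_on U (id x) \<union> support_on U (vertex_point U z))"
      using isolated assms(3) unfolding support_vertex_point[OF \<open>z \<in> U\<close>] independent_set_def id_def
      by blast
  qed (rule continuous_map_id)
  then show ?thesis unfolding contractible_space_def by blast
qed

lemma restrict_in_realization:
  assumes "finite U" "U' \<subseteq> U" "W \<subseteq> U'" "f \<in> realization_set U W E"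
  shows "restrict f U' \<in> realization_set U' W E"
proof -
  have f: "support_on U f \<subseteq> W" "independent_set E (support_on U f)" "simplex_point U f"
    using assms(4) by (auto simp: realization_set_def)
  have "support_on U' (restrict f U') = support_on U f"
    using f(1) assms(2,3) by (auto simp: support_on_def)
  moreover have "sum f U' = sum f U"
    using f(1) assms(1-3) by (intro sum.mono_neutral_left) (auto simp: support_on_def)
  ultimately show ?thesis
    using f assms(2) by (auto simp: realization_set_def simplex_point_def)
qed

lemma zero_extension_in_realization:
  assumes "finite U" "U' \<subseteq> U" "g \<in> realization_set U' W E"
  shows "restrict (\<lambda>u. if u \<in> U' then g u else 0) U \<in> realization_set U W E"
    (is "?e \<in> _")
proof -
  have g: "support_on U' g \<subseteq> W" "independent_set E (support_on U' g)" "simplex_point U' g"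
    using assms(3) by (auto simp: realization_set_def)
  have "support_on U ?e = support_on U' g"
    using assms(2) by (auto simp: support_on_def)
  moreover have "sum ?e U = sum ?e U'"
    using assms(1,2) by (intro sum.mono_neutral_right) auto
  moreover have "\<dots> = sum g U'"
    using assms(2) by (intro sum.cong) auto
  ultimately show ?thesis
    using g by (auto simp: realization_set_def simplex_point_def)
qed

lemma realization_homeomorphic_smaller_ambient:
  assumes "finite U" "U' \<subseteq> U" "W \<subseteq> U'"
  shows "realization U W E homeomorphic_space realization U' W E"
proof -
  let ?r = "\<lambda>f. restrict f U'"
  let ?e = "\<lambda>g. restrict (\<lambda>u. if u \<in> U' then g u else 0) U"
  have hm: "homeomorphic_maps (realization U W E) (realization U' W E) ?r ?e"
    unfolding homeomorphic_maps_def
  proof (intro conjI ballI)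
    show "continuous_map (realization U W E) (realization U' W E) ?r"
    proof (rule continuous_map_into_realization)
      fix u assume "u \<in> U'"
      then show "continuous_map (realization U W E) euclideanreal (\<lambda>f. ?r f u)"
        using assms(2) continuous_map_realization_coord[of u U W E] by auto
    qed (use assms restrict_in_realization in auto)
    show "continuous_map (realization U' W E) (realization U W E) ?e"
    proof (rule continuous_map_into_realization)
      fix u assume "u \<in> U"
      then show "continuous_map (realization U' W E) euclideanreal (\<lambda>g. ?e g u)"
        using continuous_map_realization_coord[of u U' W E] by (cases "u \<in> U'") auto
    qed (use assms zero_extension_in_realization in auto)
    show "?e (?r f) = f" if "f \<in> topspace (realization U W E)" for f
    proof -
      have "f \<in> extensional U" "\<forall>u\<in>U - U'. f u = 0"
        using that assms(3) by (auto simp: realization_set_def simplex_point_def support_on_def)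
      then show ?thesis by (auto simp: fun_eq_iff extensional_def)
    qed
    show "?r (?e g) = g" if "g \<in> topspace (realization U' W E)" for g
      using that assms(2) realization_set_extensional[of g U' W E]
      by (auto simp: fun_eq_iff extensional_def)
  qed
  show ?thesis
    unfolding homeomorphic_space_def by (intro exI[of _ ?r] exI[of _ ?e]) (rule hm)
qed

lemma homeomorphic_indep_space_delete_vertex:
  assumes "finite (fst H)"
  shows "realization (fst H) (fst H - {v}) (snd H) homeomorphic_space indep_space (delete_vertex H v)"
proof -
  have "indep_space (delete_vertex H v)
          = realization (fst H - {v}) (fst H - {v}) (\<lambda>x y. x \<noteq> v \<and> y \<noteq> v \<and> snd H x y)"
    by (simp add: indep_space_eq_realization delete_vertex_def)
  also have "\<dots> = realization (fst H - {v}) (fst H - {v}) (snd H)"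
    unfolding realization_def by (subst realization_set_cong[where E' = "snd H"]) auto
  finally show ?thesis
    by (simp add: realization_homeomorphic_smaller_ambient[OF assms])
qed

definition non_neighbours :: "'a set \<Rightarrow> ('a \<Rightarrow> 'a \<Rightarrow> bool) \<Rightarrow> 'a \<Rightarrow> 'a set" where
  "non_neighbours W E v = {x\<in>W. x \<noteq> v \<and> \<not> E v x \<and> \<not> E x v}"

definition squash_factor :: "real \<Rightarrow> real" where
  "squash_factor s = max 0 (1 - 3 * s)"

definition apex_weight :: "real \<Rightarrow> real" where
  "apex_weight s = 1 - (1 - s) * squash_factor s"

definition contraction_time :: "real \<Rightarrow> real" where
  "contraction_time s = min 1 (max 0 (9 * s - 1))"

lemma apex_weight_bounds:
  assumes "0 \<le> s" "s \<le> 1"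
  shows "0 \<le> apex_weight s" "apex_weight s \<le> 1"
proof -
  have "0 \<le> squash_factor s" "squash_factor s \<le> 1"
    using assms by (auto simp: squash_factor_def)
  then have "(1 - s) * squash_factor s \<le> 1" "0 \<le> (1 - s) * squash_factor s"
    using assms by (auto intro: mult_le_one)
  then show "0 \<le> apex_weight s" "apex_weight s \<le> 1" by (auto simp: apex_weight_def)
qed

lemma apex_weight_0 [simp]: "apex_weight 0 = 0"
  by (simp add: apex_weight_def squash_factor_def)

lemma apex_weight_eq_1: "1/3 \<le> s \<Longrightarrow> apex_weight s = 1"
  by (simp add: apex_weight_def squash_factor_def)

lemma contraction_time_bounds: "0 \<le> contraction_time s" "contraction_time s \<le> 1"
  by (auto simp: contraction_time_def)

lemma contraction_time_eq_0: "s \<le> 1/9 \<Longrightarrow> contraction_time s = 0"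
  by (simp add: contraction_time_def)

lemma contraction_time_eq_1: "2/9 \<le> s \<Longrightarrow> contraction_time s = 1"
  by (simp add: contraction_time_def)

lemma continuous_map_apex_weight [continuous_intros]:
  "continuous_map X euclideanreal g \<Longrightarrow> continuous_map X euclideanreal (\<lambda>x. apex_weight (g x))"
  unfolding apex_weight_def squash_factor_def by (intro continuous_intros)

lemma continuous_map_squash_factor [continuous_intros]:
  "continuous_map X euclideanreal g \<Longrightarrow> continuous_map X euclideanreal (\<lambda>x. squash_factor (g x))"
  unfolding squash_factor_def by (intro continuous_intros)

lemma continuous_map_contraction_time [continuous_intros]:
  "continuous_map X euclideanreal g \<Longrightarrow> continuous_map X euclideanreal (\<lambda>x. contraction_time (g x))"
  unfolding contraction_time_def by (intro continuous_intros)

text \<open>\<open>realization U (non_neighbours W E v) E\<close> is the link of \<open>v\<close> in \<open>realization U W E\<close>.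
  A point \<open>x\<close> with \<open>x v = s < 1\<close> is the convex combination, with weight \<open>s\<close> on the apex \<open>v\<close>,
  of \<open>deflate x\<close> and the apex, and \<open>deflate x\<close> lies in the link when \<open>s > 0\<close>. The homotopy from
  the identity to \<open>retract\<close> first \<open>squash\<close>es all points with \<open>s \<ge> 1/3\<close> onto the apex, then runs
  the contraction \<open>k\<close> of the link in the collar \<open>1/9 \<le> s \<le> 2/9\<close>, and finally moves straight to
  the base of the cone.\<close>

locale link_contraction =
  fixes U W :: "'a set" and E :: "'a \<Rightarrow> 'a \<Rightarrow> bool" and v :: 'a
    and k :: "real \<times> ('a \<Rightarrow> real) \<Rightarrow> 'a \<Rightarrow> real" and p :: "'a \<Rightarrow> real"
  assumes finite_U: "finite U" and W_subset: "W \<subseteq> U" and v_in_W: "v \<in> W" and no_loop: "\<not> E v v"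
    and k_continuous: "continuous_map (prod_topology (top_of_set {0..1}) (realization U (non_neighbours W E v) E))
                         (realization U (non_neighbours W E v) E) k"
    and k_0: "\<And>y. y \<in> realization_set U (non_neighbours W E v) E \<Longrightarrow> k (0, y) = y"
    and k_1: "\<And>y. y \<in> realization_set U (non_neighbours W E v) E \<Longrightarrow> k (1, y) = p"
    and p_in: "p \<in> realization_set U (non_neighbours W E v) E"
begin

abbreviation "N \<equiv> non_neighbours W E v"
abbreviation "X \<equiv> realization U W E"
abbreviation "Y \<equiv> realization U (W - {v}) E"
abbreviation "L \<equiv> realization U N E"
abbreviation "Z \<equiv> prod_topology (top_of_set {0..1::real}) X"

definition apex :: "'a \<Rightarrow> real" where
  "apex = vertex_point U v"

definition deflate :: "('a \<Rightarrow> real) \<Rightarrow> 'a \<Rightarrow> real" where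
  "deflate x = restrict (\<lambda>u. if u = v then 0 else x u / (1 - x v)) U"

definition squash :: "('a \<Rightarrow> real) \<Rightarrow> 'a \<Rightarrow> real" where
  "squash x = restrict (\<lambda>u. if u = v then apex_weight (x v) else squash_factor (x v) * x u) U"

definition retract :: "('a \<Rightarrow> real) \<Rightarrow> 'a \<Rightarrow> real" where
  "retract x = (if x v \<le> 1/9 then deflate x
                else if x v \<le> 2/9 then k (contraction_time (x v), deflate x) else p)"

definition cone_retract :: "('a \<Rightarrow> real) \<Rightarrow> 'a \<Rightarrow> real" where
  "cone_retract x = convex_comb U (apex_weight (x v)) (retract x) apex"

definition link_homotopy :: "real \<Rightarrow> ('a \<Rightarrow> real) \<Rightarrow> 'a \<Rightarrow> real" where
  "link_homotopy t x = (if x v \<le> 1/9 then squash x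
     else if x v \<le> 1/3 then convex_comb U (apex_weight (x v)) (k (t * contraction_time (x v), deflate x)) apex
     else apex)"

lemma v_in_U: "v \<in> U"
  using v_in_W W_subset by blast

lemma apex_in_realization: "apex \<in> realization_set U W E"
  unfolding apex_def using finite_U W_subset v_in_W no_loop by (rule vertex_point_in_realization)

lemma support_apex: "support_on U apex = {v}"
  unfolding apex_def by (rule support_vertex_point[OF v_in_U])

lemma link_subset: "N \<subseteq> W - {v}"
  by (auto simp: non_neighbours_def)

lemma link_point_cone_independent:
  assumes "y \<in> realization_set U N E"
  shows "insert v (support_on U y) \<subseteq> W" "independent_set E (insert v (support_on U y))"
  using assms v_in_W no_loop
  by (auto simp: realization_set_def non_neighbours_def independent_set_def)

lemma cone_in_realization:
  assumes "y \<in> realization_set U N E" "0 \<le> a" "a \<le> 1"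
  shows "convex_comb U a y apex \<in> realization_set U W E"
  using link_point_cone_independent[OF assms(1)]
  by (intro convex_comb_in_realization[OF finite_U assms(1) apex_in_realization assms(2,3)])
    (simp_all add: support_apex)

lemma link_in_punctured: "realization_set U N E \<subseteq> realization_set U (W - {v}) E"
  by (rule realization_set_mono[OF link_subset])

lemma realization_set_punctured_iff:
  "x \<in> realization_set U (W - {v}) E \<longleftrightarrow> x \<in> realization_set U W E \<and> x v = 0"
  using v_in_U by (auto simp: realization_set_def support_on_def)

lemma deflate_apply: "u \<in> U \<Longrightarrow> deflate x u = (if u = v then 0 else x u / (1 - x v))"
  by (simp add: deflate_def)

lemma deflate_in_link:
  assumes x: "x \<in> realization_set U W E" and s: "0 < x v" "x v < 1"
  shows "deflate x \<in> realization_set U N E"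
proof -
  have sx: "support_on U x \<subseteq> W" "independent_set E (support_on U x)" "simplex_point U x"
    using x by (auto simp: realization_set_def)
  have v: "v \<in> support_on U x" using s v_in_U by (auto simp: support_on_def)
  have supp: "support_on U (deflate x) = support_on U x - {v}"
    using s by (auto simp: support_on_def deflate_apply split: if_splits)
  have "sum (deflate x) U = (\<Sum>u\<in>U - {v}. x u / (1 - x v))"
    using finite_U v_in_U by (simp add: deflate_def sum.If_cases Diff_eq)
  also have "\<dots> = (sum x U - x v) / (1 - x v)"
    using finite_U v_in_U by (simp add: sum_divide_distrib[symmetric] sum_diff1)
  also have "\<dots> = 1"
    using sx(3) s by (simp add: simplex_point_def)
  finally have "simplex_point U (deflate x)"
    using sx(3) s by (auto simp: simplex_point_def deflate_def)
  moreover have "support_on U (deflate x) \<subseteq> N"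
    using sx(1,2) v unfolding supp non_neighbours_def independent_set_def by auto
  moreover have "independent_set E (support_on U (deflate x))"
    using sx(2) supp by (auto intro: independent_set_subset)
  ultimately show ?thesis by (simp add: realization_set_def)
qed

lemma deflate_eq_self: "x \<in> realization_set U W E \<Longrightarrow> x v = 0 \<Longrightarrow> deflate x = x"
  using realization_set_extensional[of x U W E]
  by (auto simp: deflate_def extensional_def fun_eq_iff)

lemma squash_eq_cone:
  assumes "x v \<le> 1/3"
  shows "convex_comb U (apex_weight (x v)) (deflate x) apex = squash x"
proof
  fix u
  have "1 - x v \<noteq> 0" using assms by auto
  then show "convex_comb U (apex_weight (x v)) (deflate x) apex u = squash x u"
    by (cases "u \<in> U")
      (auto simp: convex_comb_def deflate_def squash_def apex_def vertex_point_def apex_weight_def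
        field_simps)
qed

lemma squash_eq_apex: "1/3 \<le> x v \<Longrightarrow> squash x = apex"
  by (auto simp: squash_def apex_def vertex_point_def apex_weight_def squash_factor_def fun_eq_iff)

lemma squash_in_realization:
  assumes x: "x \<in> realization_set U W E"
  shows "squash x \<in> realization_set U W E" "support_on U (squash x) \<subseteq> support_on U x"
proof -
  have s: "0 \<le> x v" "x v \<le> 1" using realization_set_bounds[OF finite_U x v_in_U] by auto
  have px: "simplex_point U x" using x by (simp add: realization_set_def)
  show supp: "support_on U (squash x) \<subseteq> support_on U x"
    by (auto simp: support_on_def squash_def)
  have "sum (squash x) U = apex_weight (x v) + squash_factor (x v) * (sum x U - x v)"
    using finite_U v_in_U
    by (simp add: squash_def sum.If_cases Diff_eq sum_distrib_left[symmetric] sum_diff1 flip: Diff_eq)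
  also have "\<dots> = 1" using px by (simp add: simplex_point_def apex_weight_def algebra_simps)
  finally have "simplex_point U (squash x)"
    using px apex_weight_bounds[OF s] by (auto simp: simplex_point_def squash_def squash_factor_def)
  then show "squash x \<in> realization_set U W E"
    using x supp by (auto simp: realization_set_def intro: independent_set_subset)
qed

lemma continuous_map_squash: "continuous_map X X squash"
proof (rule continuous_map_into_realization)
  fix u assume "u \<in> U"
  have "continuous_map X euclideanreal (\<lambda>x. if u = v then apex_weight (x v) else squash_factor (x v) * x u)"
    using continuous_map_realization_coord[OF v_in_U] continuous_map_realization_coord[OF \<open>u \<in> U\<close>]
    by (auto intro!: continuous_intros)
  then show "continuous_map X euclideanreal (\<lambda>x. squash x u)"
    using \<open>u \<in> U\<close> by (simp add: squash_def)
qed (simp add: squash_in_realization)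

lemma homotopic_id_squash: "homotopic_with (\<lambda>_. True) X X id squash"
proof (rule homotopic_with_convex_comb[OF finite_U continuous_map_id continuous_map_squash])
  fix x assume "x \<in> topspace X"
  then show "independent_set E (support_on U (id x) \<union> support_on U (squash x))"
    using squash_in_realization(2)[of x] by (simp add: realization_set_def Un_absorb2)
qed

lemma continuous_map_deflate:
  assumes "c < 1"
  shows "continuous_map (subtopology X {x. x v \<le> c}) (realization U (W - {v}) E) deflate"
proof (rule continuous_map_into_realization)
  let ?S = "subtopology X {x. x v \<le> c}"
  fix u assume "u \<in> U"
  have "continuous_map ?S euclideanreal (\<lambda>x. x u / (1 - x v))"
    using assms continuous_map_realization_coord[OF v_in_U] continuous_map_realization_coord[OF \<open>u \<in> U\<close>]
    by (intro continuous_intros continuous_map_from_subtopology) auto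
  then show "continuous_map ?S euclideanreal (\<lambda>x. deflate x u)"
    using \<open>u \<in> U\<close> by (cases "u = v") (simp_all add: deflate_apply)
next
  fix x assume "x \<in> topspace (subtopology X {x. x v \<le> c})"
  then have x: "x \<in> realization_set U W E" "x v < 1" using assms by auto
  show "deflate x \<in> realization_set U (W - {v}) E"
  proof (cases "x v = 0")
    case True
    then show ?thesis using x by (simp add: deflate_eq_self realization_set_punctured_iff)
  next
    case False
    then have "0 < x v" using realization_set_bounds[OF finite_U x(1) v_in_U] by simp
    then show ?thesis using deflate_in_link[OF x(1) _ x(2)] link_in_punctured by blast
  qed
qed

lemma continuous_map_deflate_link:
  assumes "0 < a" "b < 1"
  shows "continuous_map (subtopology X {x. a \<le> x v \<and> x v \<le> b}) L deflate"
proof -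
  have "continuous_map (subtopology X {x. a \<le> x v \<and> x v \<le> b}) (realization U (W - {v}) E) deflate"
    using continuous_map_deflate[OF assms(2)] by (rule continuous_map_from_subtopology_mono) auto
  moreover have "deflate x \<in> realization_set U N E"
    if "x \<in> topspace (subtopology X {x. a \<le> x v \<and> x v \<le> b})" for x
    using that assms by (intro deflate_in_link) auto
  ultimately show ?thesis
    using realization_subtopology[OF link_subset] by (simp add: continuous_map_in_subtopology image_subset_iff)
qed

lemma continuous_map_contraction:
  assumes "continuous_map T euclideanreal a" "\<And>z. z \<in> topspace T \<Longrightarrow> 0 \<le> a z \<and> a z \<le> 1"
    and "continuous_map T L y"
  shows "continuous_map T L (\<lambda>z. k (a z, y z))"
proof -
  have "continuous_map T (top_of_set {0..1}) a"
    using assms(1,2) by (auto simp: continuous_map_in_subtopology)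
  then have "continuous_map T (prod_topology (top_of_set {0..1}) L) (\<lambda>z. (a z, y z))"
    using assms(3) by (intro continuous_map_pairedI)
  from continuous_map_compose[OF this k_continuous] show ?thesis by (simp add: o_def)
qed

lemma retract_in_link:
  assumes "x \<in> realization_set U W E" "0 < x v"
  shows "retract x \<in> realization_set U N E"
proof -
  have "x v \<le> 2/9 \<Longrightarrow> deflate x \<in> realization_set U N E"
    using assms by (intro deflate_in_link) auto
  moreover have "y \<in> realization_set U N E \<Longrightarrow> k (a, y) \<in> realization_set U N E"
    if "0 \<le> a" "a \<le> 1" for a y
    using continuous_map_image_subset_topspace[OF k_continuous] that by (auto simp: image_subset_iff)
  ultimately show ?thesis
    using p_in contraction_time_bounds by (auto simp: retract_def)
qed

lemma retract_eq_self: "y \<in> realization_set U (W - {v}) E \<Longrightarrow> retract y = y"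
  by (simp add: retract_def realization_set_punctured_iff deflate_eq_self)

lemma continuous_map_retract: "continuous_map X Y retract"
  unfolding retract_def
proof (rule continuous_map_cases_le3[OF continuous_map_realization_coord[OF v_in_U]])
  show "continuous_map (subtopology X {x. x v \<le> 1/9}) Y deflate"
    by (rule continuous_map_deflate) simp
  have "continuous_map (subtopology X {x. 1/9 \<le> x v \<and> x v \<le> 2/9}) L
          (\<lambda>x. k (contraction_time (x v), deflate x))"
    by (intro continuous_map_contraction continuous_map_deflate_link continuous_intros
        continuous_map_from_subtopology continuous_map_realization_coord[OF v_in_U])
      (simp_all add: contraction_time_bounds)
  then show "continuous_map (subtopology X {x. 1/9 \<le> x v \<and> x v \<le> 2/9}) Y
               (\<lambda>x. k (contraction_time (x v), deflate x))"
    using link_subset by (rule continuous_map_realization_mono)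
  show "continuous_map (subtopology X {x. 2/9 \<le> x v}) Y (\<lambda>x. p)"
    using p_in link_in_punctured by auto
  show "deflate x = k (contraction_time (x v), deflate x)" if "x \<in> topspace X" "x v = 1/9" for x
    using that by (simp add: contraction_time_eq_0 k_0 deflate_in_link)
  show "k (contraction_time (x v), deflate x) = p" if "x \<in> topspace X" "x v = 2/9" for x
    using that by (simp add: contraction_time_eq_1 k_1 deflate_in_link)
qed simp

lemma link_homotopy_0: "x \<in> realization_set U W E \<Longrightarrow> link_homotopy 0 x = squash x"
  by (auto simp: link_homotopy_def k_0 deflate_in_link squash_eq_cone squash_eq_apex)

lemma link_homotopy_1:
  assumes "x \<in> realization_set U W E"
  shows "link_homotopy 1 x = cone_retract x"
proof -
  consider "x v \<le> 1/9" | "1/9 < x v" "x v \<le> 1/3" | "1/3 < x v" by linarith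
  then show ?thesis
  proof cases
    case 1
    then show ?thesis by (simp add: link_homotopy_def cone_retract_def retract_def squash_eq_cone)
  next
    case 2
    then have "deflate x \<in> realization_set U N E" using assms by (intro deflate_in_link) auto
    with 2 show ?thesis
      by (auto simp: link_homotopy_def cone_retract_def retract_def k_1 contraction_time_eq_1)
  next
    case 3
    have "apex \<in> extensional U"
      by (simp add: apex_def vertex_point_def)
    with 3 show ?thesis
      by (simp add: link_homotopy_def cone_retract_def apex_weight_eq_1 convex_comb_1)
  qed
qed

lemma continuous_map_height: "continuous_map Z euclideanreal (\<lambda>z. snd z v)"
  using continuous_map_compose[OF continuous_map_snd continuous_map_realization_coord[OF v_in_U]]
  by (simp add: o_def)

lemma continuous_map_collar_homotopy:
  "continuous_map (subtopology Z {z. 1/9 \<le> snd z v \<and> snd z v \<le> 1/3}) X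
     (\<lambda>z. convex_comb U (apex_weight (snd z v)) (k (fst z * contraction_time (snd z v), deflate (snd z))) apex)"
    (is "continuous_map ?C X _")
proof -
  let ?M = "{x. 1/9 \<le> x v \<and> x v \<le> 1/3}"
  have height: "continuous_map ?C euclideanreal (\<lambda>z. snd z v)"
    by (rule continuous_map_from_subtopology[OF continuous_map_height])
  have "continuous_map Z euclideanreal fst"
    using continuous_map_fst continuous_map_in_subtopology by blast
  then have time: "continuous_map ?C euclideanreal fst"
    by (rule continuous_map_from_subtopology)
  have "continuous_map (subtopology Z {z. snd z \<in> ?M}) L (\<lambda>z. deflate (snd z))"
    using continuous_map_compose[OF continuous_map_snd_subtopology continuous_map_deflate_link[of "1/9" "1/3"]]
    by (simp add: o_def)
  then have "continuous_map ?C L (\<lambda>z. deflate (snd z))"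
    by simp
  then have contracted: "continuous_map ?C L (\<lambda>z. k (fst z * contraction_time (snd z v), deflate (snd z)))"
    by (intro continuous_map_contraction continuous_intros time height)
      (auto simp: contraction_time_bounds mult_le_one)
  show ?thesis
  proof (rule continuous_map_convex_comb[OF _ contracted, where Wg = W])
    show "continuous_map ?C euclideanreal (\<lambda>z. apex_weight (snd z v))"
      by (intro continuous_intros height)
    show "continuous_map ?C X (\<lambda>z. apex)"
      using apex_in_realization by simp
    fix z assume z: "z \<in> topspace ?C"
    then have "k (fst z * contraction_time (snd z v), deflate (snd z)) \<in> realization_set U N E"
      using continuous_map_image_subset_topspace[OF contracted] by auto
    moreover have "0 \<le> snd z v" "snd z v \<le> 1"
      using z realization_set_bounds[OF finite_U _ v_in_U, of "snd z"] by auto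
    ultimately show "convex_comb U (apex_weight (snd z v))
                       (k (fst z * contraction_time (snd z v), deflate (snd z))) apex \<in> realization_set U W E"
      using apex_weight_bounds by (intro cone_in_realization) auto
  qed
qed

lemma continuous_map_link_homotopy: "continuous_map Z X (\<lambda>z. link_homotopy (fst z) (snd z))"
  unfolding link_homotopy_def
proof (rule continuous_map_cases_le3[OF continuous_map_height _ _ continuous_map_collar_homotopy])
  show "continuous_map (subtopology Z {z. snd z v \<le> 1/9}) X (\<lambda>z. squash (snd z))"
    using continuous_map_compose[OF continuous_map_from_subtopology[OF continuous_map_snd] continuous_map_squash]
    by (simp add: o_def)
  show "continuous_map (subtopology Z {z. 1/3 \<le> snd z v}) X (\<lambda>z. apex)"
    using apex_in_realization by simp
  show "squash (snd z) =
          convex_comb U (apex_weight (snd z v)) (k (fst z * contraction_time (snd z v), deflate (snd z))) apex"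
    if "z \<in> topspace Z" "snd z v = 1/9" for z
  proof -
    have "deflate (snd z) \<in> realization_set U N E"
      using that by (intro deflate_in_link) (auto simp: mem_Times_iff)
    then show ?thesis
      using that(2) by (simp add: contraction_time_eq_0 k_0 squash_eq_cone)
  qed
  show "convex_comb U (apex_weight (snd z v)) (k (fst z * contraction_time (snd z v), deflate (snd z))) apex
          = apex" if "z \<in> topspace Z" "snd z v = 1/3" for z
    using that by (simp add: apex_weight_eq_1 convex_comb_1 apex_def vertex_point_def)
qed simp

lemma homotopic_squash_cone_retract: "homotopic_with (\<lambda>_. True) X X squash cone_retract"
  by (rule homotopic_with_trueI[OF continuous_map_link_homotopy])
    (simp_all add: link_homotopy_0 link_homotopy_1)

lemma cone_retract_in_realization:
  assumes "x \<in> realization_set U W E"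
  shows "cone_retract x \<in> realization_set U W E \<and>
         independent_set E (support_on U (cone_retract x) \<union> support_on U (retract x))"
proof (cases "x v = 0")
  case True
  then have "retract x = x"
    using assms by (simp add: retract_eq_self realization_set_punctured_iff)
  with True have "cone_retract x = x"
    using realization_set_extensional[OF assms] by (simp add: cone_retract_def convex_comb_0)
  with \<open>retract x = x\<close> show ?thesis
    using assms by (simp add: realization_set_def)
next
  case False
  have s: "0 \<le> x v" "x v \<le> 1" using realization_set_bounds[OF finite_U assms v_in_U] by auto
  with False have r: "retract x \<in> realization_set U N E"
    using assms by (intro retract_in_link) auto
  have "support_on U (cone_retract x) \<subseteq> insert v (support_on U (retract x))"
    by (auto simp: support_on_def cone_retract_def convex_comb_apply apex_def vertex_point_def)
  then have "independent_set E (support_on U (cone_retract x) \<union> support_on U (retract x))"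
    by (intro independent_set_subset[OF link_point_cone_independent(2)[OF r]]) blast
  then show ?thesis
    using cone_in_realization[OF r apex_weight_bounds[OF s]] by (simp add: cone_retract_def)
qed

lemma homotopic_cone_retract_retract: "homotopic_with (\<lambda>_. True) X X cone_retract retract"
proof (rule homotopic_with_convex_comb[OF finite_U])
  have retract_X: "continuous_map X X retract"
    using continuous_map_retract by (rule continuous_map_realization_mono) auto
  then show "continuous_map X X retract" .
  show "continuous_map X X cone_retract"
    unfolding cone_retract_def
    using apex_in_realization cone_retract_in_realization
    by (intro continuous_map_convex_comb[OF _ retract_X] continuous_intros continuous_map_realization_coord
        v_in_U) (auto simp: cone_retract_def)
qed (simp add: cone_retract_in_realization)

theorem homotopy_equivalent_delete_vertex: "X homotopy_equivalent_space Y"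
proof (rule deformation_retract_imp_homotopy_equivalent_space)
  have "homotopic_with (\<lambda>_. True) X X id retract"
    using homotopic_with_trans[OF homotopic_with_trans[OF homotopic_id_squash homotopic_squash_cone_retract]
        homotopic_cone_retract_retract] .
  then show "homotopic_with (\<lambda>_. True) X X retract id"
    by (rule homotopic_with_symD)
  have "continuous_map Y X id"
    by (rule continuous_map_realization_mono[OF continuous_map_id]) auto
  then show "retraction_maps X Y retract id"
    unfolding retraction_maps_def using continuous_map_retract by (simp add: retract_eq_self)
qed

end

lemma realization_homotopy_equivalent_delete_vertex:
  assumes "finite U" "W \<subseteq> U" "v \<in> W" "\<not> E v v"
    and contractible: "contractible_space (realization U (non_neighbours W E v) E)"
    and nonempty: "realization_set U (non_neighbours W E v) E \<noteq> {}"
  shows "realization U W E homotopy_equivalent_space realization U (W - {v}) E"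
proof -
  let ?L = "realization U (non_neighbours W E v) E"
  obtain p where "homotopic_with (\<lambda>_. True) ?L ?L id (\<lambda>_. p)"
    using contractible unfolding contractible_space_def by blast
  then have "\<exists>k. continuous_map (prod_topology (top_of_set {0..1::real}) ?L) ?L k \<and>
      (\<forall>y\<in>topspace ?L. k (0, y) = y) \<and> (\<forall>y\<in>topspace ?L. k (1, y) = p)"
    by (subst (asm) homotopic_with) auto
  then obtain k where k: "continuous_map (prod_topology (top_of_set {0..1::real}) ?L) ?L k"
    and k0: "\<forall>y\<in>topspace ?L. k (0, y) = y" and k1: "\<forall>y\<in>topspace ?L. k (1, y) = p"
    by blast
  obtain y where y: "y \<in> realization_set U (non_neighbours W E v) E"
    using nonempty by blast
  then have "k (1, y) \<in> realization_set U (non_neighbours W E v) E"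
    using continuous_map_image_subset_topspace[OF k] by auto
  with k1 y have "p \<in> realization_set U (non_neighbours W E v) E"
    by simp
  with assms k k0 k1 interpret link_contraction U W E v k p
    by unfold_locales simp_all
  show ?thesis
    by (rule homotopy_equivalent_delete_vertex)
qed

lemma realization_homotopy_equivalent_delete_dominating_vertex:
  assumes "finite U" "W \<subseteq> U" "u \<in> W" "w \<in> W" "u \<noteq> w"
    and "\<not> E u w" "\<not> E w u" "\<not> E u u" "\<not> E w w"
    and dominates: "\<And>x. x \<in> W \<Longrightarrow> E u x \<or> E x u \<Longrightarrow> E w x \<or> E x w"
  shows "realization U W E homotopy_equivalent_space realization U (W - {w}) E"
proof (rule realization_homotopy_equivalent_delete_vertex)
  show "finite U" "W \<subseteq> U" "w \<in> W" "\<not> E w w" by fact+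
  have u: "u \<in> non_neighbours W E w" and sub: "non_neighbours W E w \<subseteq> U"
    using assms(2,3,5,6,7) by (auto simp: non_neighbours_def)
  show "contractible_space (realization U (non_neighbours W E w) E)"
    using dominates by (intro contractible_realization_isolated_vertex[OF assms(1) sub u])
      (auto simp: non_neighbours_def)
  show "realization_set U (non_neighbours W E w) E \<noteq> {}"
    using vertex_point_in_realization[OF assms(1) sub u, of E] assms(8) by blast
qed

definition is_path_component :: "('a \<Rightarrow> 'a \<Rightarrow> bool) \<Rightarrow> 'a set \<Rightarrow> (nat \<Rightarrow> 'a) \<Rightarrow> nat \<Rightarrow> bool" where
  "is_path_component E W q l \<longleftrightarrow> inj_on q {1..l} \<and> q ` {1..l} \<subseteq> W \<and>
     (\<forall>j. 1 \<le> j \<longrightarrow> j < l \<longrightarrow> E (q j) (q (j + 1))) \<and>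
     (\<forall>j x. 1 \<le> j \<longrightarrow> j \<le> l \<longrightarrow> x \<in> W \<longrightarrow> E (q j) x \<or> E x (q j) \<longrightarrow>
        (1 < j \<and> x = q (j - 1)) \<or> (j < l \<and> x = q (j + 1)))"

lemma is_path_componentD:
  assumes "is_path_component E W q l"
  shows "inj_on q {1..l}" "q ` {1..l} \<subseteq> W" "\<And>j. 1 \<le> j \<Longrightarrow> j < l \<Longrightarrow> E (q j) (q (j + 1))"
    and "\<And>j x. 1 \<le> j \<Longrightarrow> j \<le> l \<Longrightarrow> x \<in> W \<Longrightarrow> E (q j) x \<or> E x (q j) \<Longrightarrow>
           (1 < j \<and> x = q (j - 1)) \<or> (j < l \<and> x = q (j + 1))"
  using assms unfolding is_path_component_def by blast+

lemma is_path_component_no_loop: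
  assumes "is_path_component E W q l" "1 \<le> j" "j \<le> l"
  shows "\<not> E (q j) (q j)"
proof
  assume "E (q j) (q j)"
  moreover have "q j \<in> W"
    using is_path_componentD(2)[OF assms(1)] assms(2,3) by auto
  ultimately have "(1 < j \<and> q j = q (j - 1)) \<or> (j < l \<and> q j = q (j + 1))"
    using is_path_componentD(4)[OF assms(1,2,3)] by blast
  then show False
  proof (elim disjE conjE)
    assume "1 < j" "q j = q (j - 1)"
    moreover have "j \<in> {1..l}" "j - 1 \<in> {1..l}"
      using assms(2,3) \<open>1 < j\<close> by auto
    ultimately have "j = j - 1"
      using inj_onD[OF is_path_componentD(1)[OF assms(1)]] by blast
    with \<open>1 < j\<close> show False by simp
  next
    assume "j < l" "q j = q (j + 1)"
    moreover have "j \<in> {1..l}" "j + 1 \<in> {1..l}"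
      using assms(2) \<open>j < l\<close> by auto
    ultimately have "j = j + 1"
      using inj_onD[OF is_path_componentD(1)[OF assms(1)]] by blast
    then show False by simp
  qed
qed

lemma is_path_component_shift:
  assumes "is_path_component E W q (l + 3)"
  shows "is_path_component E (W - {q 3}) (\<lambda>j. q (j + 3)) l"
  unfolding is_path_component_def
proof (intro conjI allI impI)
  note inj = is_path_componentD(1)[OF assms]
  have q3: "q (j + 3) \<noteq> q 3" if "1 \<le> j" "j \<le> l" for j
  proof
    assume "q (j + 3) = q 3"
    then have "j + 3 = 3" by (rule inj_onD[OF inj]) (use that in auto)
    with that show False by simp
  qed
  show "inj_on (\<lambda>j. q (j + 3)) {1..l}"
  proof (rule inj_onI)
    fix i j assume ij: "i \<in> {1..l}" "j \<in> {1..l}" and eq: "q (i + 3) = q (j + 3)"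
    from eq have "i + 3 = j + 3" by (rule inj_onD[OF inj]) (use ij in auto)
    then show "i = j" by simp
  qed
  show "(\<lambda>j. q (j + 3)) ` {1..l} \<subseteq> W - {q 3}"
  proof (rule image_subsetI)
    fix j assume "j \<in> {1..l}"
    then have "q (j + 3) \<in> W" using is_path_componentD(2)[OF assms] by auto
    with q3 \<open>j \<in> {1..l}\<close> show "q (j + 3) \<in> W - {q 3}" by simp
  qed
  show "E (q (j + 3)) (q (j + 1 + 3))" if "1 \<le> j" "j < l" for j
    using is_path_componentD(3)[OF assms, of "j + 3"] that by simp
  fix j x
  assume j: "1 \<le> j" "j \<le> l" and x: "x \<in> W - {q 3}" and adj: "E (q (j + 3)) x \<or> E x (q (j + 3))"
  have "x = q (j + 3 - 1) \<or> (j < l \<and> x = q (j + 3 + 1))"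
    using is_path_componentD(4)[OF assms, of "j + 3" x] j x adj by simp
  moreover have "j + 3 - 1 = j - 1 + 3" if "j \<noteq> 1" using that j by simp
  moreover have "x \<noteq> q (j + 3 - 1)" if "j = 1" using that x by simp
  ultimately show "(1 < j \<and> x = q (j - 1 + 3)) \<or> (j < l \<and> x = q (j + 1 + 3))"
    using j by (cases "j = 1") auto
qed

lemma contractible_realization_path_component:
  assumes "finite U" "W \<subseteq> U" "is_path_component E W q (3 * M + 1)"
  shows "contractible_space (realization U W E)"
  using assms(2,3)
proof (induction M arbitrary: W q)
  case 0
  then have "q 1 \<in> W" "\<And>x. x \<in> W \<Longrightarrow> \<not> E (q 1) x \<and> \<not> E x (q 1)"
    unfolding is_path_component_def by auto
  with 0 show ?case
    by (intro contractible_realization_isolated_vertex[OF assms(1)]) auto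
next
  case (Suc M)
  have path: "is_path_component E W q (3 * M + 1 + 3)"
    using Suc.prems(2) by (simp add: algebra_simps)
  have nbrs: "x = q 2" if "x \<in> W" "E (q 1) x \<or> E x (q 1)" for x
    using is_path_componentD(4)[OF path _ _ that] by (simp add: numeral_2_eq_2)
  have edge: "E (q 2) (q 3)"
    using is_path_componentD(3)[OF path, of 2] by simp
  have distinct: "q 1 \<noteq> q 3" "q 2 \<noteq> q 3"
    using inj_onD[OF is_path_componentD(1)[OF path], of 1 3]
      inj_onD[OF is_path_componentD(1)[OF path], of 2 3] by auto
  have in_W: "q 1 \<in> W" "q 3 \<in> W"
    using is_path_componentD(2)[OF path] by auto
  have equiv: "realization U W E homotopy_equivalent_space realization U (W - {q 3}) E"
  proof (rule realization_homotopy_equivalent_delete_dominating_vertex[OF assms(1) Suc.prems(1)])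
    show "q 1 \<in> W" "q 3 \<in> W" "q 1 \<noteq> q 3"
      using in_W distinct by auto
    show "\<not> E (q 1) (q 1)" "\<not> E (q 3) (q 3)"
      using is_path_component_no_loop[OF path] by auto
    show "\<not> E (q 1) (q 3)" "\<not> E (q 3) (q 1)"
      using nbrs[OF in_W(2)] distinct by auto
    show "E (q 3) x \<or> E x (q 3)" if "x \<in> W" "E (q 1) x \<or> E x (q 1)" for x
      using nbrs[OF that] edge by simp
  qed
  have "contractible_space (realization U (W - {q 3}) E)"
  proof (rule Suc.IH)
    show "W - {q 3} \<subseteq> U" using Suc.prems(1) by blast
  qed (rule is_path_component_shift[OF path])
  then show ?case
    using homotopy_equivalent_space_contractibility[OF equiv] by simp
qed

lemma G_adj_iff: "snd (G n t) x y \<longleftrightarrow> Gedge0 n t x y \<or> Gedge0 n t y x"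
  by (simp add: G_def)

lemma G_adj_sym: "snd (G n t) x y \<longleftrightarrow> snd (G n t) y x"
  by (auto simp: G_adj_iff)

lemma fst_G [simp]: "fst (G n t) = Gverts n t"
  by (simp add: G_def)

lemma G_irrefl: "\<not> snd (G n t) x x"
  by (cases x) (auto simp: G_adj_iff Gedge0_def)

lemma finite_Gverts: "finite (Gverts n t)"
proof -
  have "Gverts n t \<subseteq> A ` {..t} \<union> case_prod B ` ({..t} \<times> {..n}) \<union> case_prod C ` ({..t} \<times> {..n})"
    by (auto simp: Gverts_def image_iff)
  then show ?thesis
    by (rule finite_subset) auto
qed

lemma neighbour_B_last_block:
  assumes "2 \<le> i" "i \<le> n - 1" "snd (G n t) (B t i) x"
  shows "x = B t (i - 1) \<or> (i \<le> n - 2 \<and> x = B t (i + 1)) \<or> (i = n - 1 \<and> x = A t)"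
  using assms by (cases x) (auto simp: G_adj_iff Gedge0_def)

lemma neighbour_C_last_block:
  assumes "2 \<le> i" "i \<le> n - 1" "snd (G n t) (C t i) x"
  shows "x = C t (i - 1) \<or> (i \<le> n - 2 \<and> x = C t (i + 1)) \<or> (i = n - 1 \<and> x = A t)"
  using assms by (cases x) (auto simp: G_adj_iff Gedge0_def)

lemma neighbour_A:
  assumes "snd (G n t) (A i) x"
  shows "x = B i (n - 1) \<or> x = C i (n - 1) \<or> (i < t \<and> x = B (i + 1) 1) \<or> (i < t \<and> x = C (i + 1) 1)"
  using assms by (cases x) (auto simp: G_adj_iff Gedge0_def)

lemma adjacent_A_B1: "1 \<le> t \<Longrightarrow> snd (G n t) (A (t - 1)) (B t 1)"
  by (auto simp: G_adj_iff Gedge0_def)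

lemma adjacent_A_C1: "1 \<le> t \<Longrightarrow> snd (G n t) (A (t - 1)) (C t 1)"
  by (auto simp: G_adj_iff Gedge0_def)

definition link_path :: "nat \<Rightarrow> nat \<Rightarrow> nat \<Rightarrow> vert" where
  "link_path n t j = (if j \<le> n - 2 then B t (j + 1) else if j = n - 1 then A t else C t (2 * n - 1 - j))"

lemma link_path_B: "j \<le> n - 2 \<Longrightarrow> link_path n t j = B t (j + 1)"
  by (simp add: link_path_def)

lemma link_path_A: "2 \<le> n \<Longrightarrow> j = n - 1 \<Longrightarrow> link_path n t j = A t"
  by (simp add: link_path_def)

lemma link_path_C: "2 \<le> n \<Longrightarrow> n \<le> j \<Longrightarrow> link_path n t j = C t (2 * n - 1 - j)"
  by (auto simp: link_path_def)

lemma inj_on_link_path: "inj_on (link_path n t) {1..2*n-3}"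
  by (auto simp: inj_on_def link_path_def split: if_splits)

lemma link_path_in_Gverts:
  "1 \<le> t \<Longrightarrow> 1 \<le> j \<Longrightarrow> j \<le> 2*n-3 \<Longrightarrow> link_path n t j \<in> Gverts n t"
  by (auto simp: link_path_def Gverts_def)

lemma link_path_edge:
  assumes "1 \<le> t" "1 \<le> j" "j < 2*n-3"
  shows "snd (G n t) (link_path n t j) (link_path n t (j + 1))"
  using assms by (auto simp: link_path_def G_adj_iff Gedge0_def)

lemma link_path_neighbour:
  assumes "2 \<le> n" "1 \<le> j" "j \<le> 2*n-3" "snd (G n t) (link_path n t j) x"
  shows "(1 < j \<and> x = link_path n t (j - 1)) \<or> (j < 2*n-3 \<and> x = link_path n t (j + 1))
           \<or> x = B t 1 \<or> x = C t 1"
proof -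
  consider "j \<le> n - 2" | "j = n - 1" | "n \<le> j" by linarith
  then show ?thesis
  proof cases
    case 1
    with assms(4) have "snd (G n t) (B t (j + 1)) x" by (simp add: link_path_B)
    from neighbour_B_last_block[OF _ _ this] 1 assms(1-3) show ?thesis
      by (cases "j = 1") (auto simp: link_path_def)
  next
    case 2
    from assms(4) have "snd (G n t) (A t) x" by (simp only: link_path_A[OF assms(1) 2])
    from neighbour_A[OF this] 2 assms(1-3) show ?thesis
      by (auto simp: link_path_def; arith)
  next
    case 3
    note j = this
    define c where "c = 2 * n - 1 - j"
    have c: "2 \<le> c" "c \<le> n - 1" using j assms(1,3) by (auto simp: c_def)
    from assms(4) have "snd (G n t) (C t c) x" by (simp only: link_path_C[OF assms(1) j] c_def)
    from neighbour_C_last_block[OF c this] consider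
      "x = C t (c - 1)" | "c \<le> n - 2" "x = C t (c + 1)" | "c = n - 1" "x = A t"
      by blast
    then show ?thesis
    proof cases
      case 1
      then show ?thesis
        using c j assms(1,3) link_path_C[OF assms(1), of "j + 1" t] by (cases "c = 2") (auto simp: c_def)
    next
      case 2
      then show ?thesis
        using c j assms(1,3) link_path_C[OF assms(1), of "j - 1" t] by (auto simp: c_def)
    next
      case 3
      then have "j - 1 = n - 1" using j assms(1) by (simp add: c_def)
      with 3 show ?thesis
        using j assms(1) link_path_A[OF assms(1), of "j - 1" t] by auto
    qed
  qed
qed

lemma link_path_non_neighbour:
  assumes "1 \<le> t" "1 \<le> j" "j \<le> 2*n-3"
  shows "link_path n t j \<in> non_neighbours (Gverts n t) (snd (G n t)) (A (t - 1))"
proof -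
  have "\<not> snd (G n t) (A (t - 1)) (link_path n t j)"
    using assms neighbour_A[of n t "t - 1" "link_path n t j"] by (auto simp: link_path_def)
  then show ?thesis
    using assms link_path_in_Gverts G_adj_sym by (auto simp: non_neighbours_def link_path_def)
qed

lemma first_vertices_not_non_neighbour:
  assumes "1 \<le> t"
  shows "B t 1 \<notin> non_neighbours (Gverts n t) (snd (G n t)) (A (t - 1))"
    and "C t 1 \<notin> non_neighbours (Gverts n t) (snd (G n t)) (A (t - 1))"
  using adjacent_A_B1[OF assms] adjacent_A_C1[OF assms] by (auto simp: non_neighbours_def)

lemma is_path_component_link_path:
  assumes "1 \<le> t" "2 \<le> n"
  shows "is_path_component (snd (G n t)) (non_neighbours (Gverts n t) (snd (G n t)) (A (t - 1)))
           (link_path n t) (2*n-3)"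
  unfolding is_path_component_def
proof (intro conjI allI impI)
  show "inj_on (link_path n t) {1..2*n-3}"
    by (rule inj_on_link_path)
  show "link_path n t ` {1..2*n-3} \<subseteq> non_neighbours (Gverts n t) (snd (G n t)) (A (t - 1))"
    using link_path_non_neighbour[OF assms(1)] by auto
  show "snd (G n t) (link_path n t j) (link_path n t (j + 1))" if "1 \<le> j" "j < 2*n-3" for j
    using link_path_edge[OF assms(1) that] .
  fix j x
  assume j: "1 \<le> j" "j \<le> 2*n-3" and x: "x \<in> non_neighbours (Gverts n t) (snd (G n t)) (A (t - 1))"
    and "snd (G n t) (link_path n t j) x \<or> snd (G n t) x (link_path n t j)"
  then have "snd (G n t) (link_path n t j) x"
    using G_adj_sym by blast
  from link_path_neighbour[OF assms(2) j this] x first_vertices_not_non_neighbour[OF assms(1)]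
  show "(1 < j \<and> x = link_path n t (j - 1)) \<or> (j < 2*n-3 \<and> x = link_path n t (j + 1))"
    by auto
qed

lemma contractible_link_of_A:
  assumes "1 \<le> t"
  shows "contractible_space (realization (Gverts (3*m+2) t)
           (non_neighbours (Gverts (3*m+2) t) (snd (G (3*m+2) t)) (A (t - 1))) (snd (G (3*m+2) t)))"
proof (rule contractible_realization_path_component[OF finite_Gverts])
  show "non_neighbours (Gverts (3*m+2) t) (snd (G (3*m+2) t)) (A (t - 1)) \<subseteq> Gverts (3*m+2) t"
    by (auto simp: non_neighbours_def)
  have "2 * (3*m+2) - 3 = 3 * (2*m) + 1"
    by simp
  then show "is_path_component (snd (G (3*m+2) t))
               (non_neighbours (Gverts (3*m+2) t) (snd (G (3*m+2) t)) (A (t - 1)))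
               (link_path (3*m+2) t) (3 * (2*m) + 1)"
    using is_path_component_link_path[OF assms, of "3*m+2"] by simp
qed

theorem lemma3p4:
  fixes m t :: nat
  assumes "t \<ge> 1"
  shows "indep_space (G (3*m+2) t) homotopy_equivalent_space
           indep_space (delete_vertex (G (3*m+2) t) (A (t-1)))"
proof -
  let ?V = "Gverts (3*m+2) t" and ?E = "snd (G (3*m+2) t)" and ?a = "A (t - 1)"
  have "link_path (3*m+2) t 1 \<in> non_neighbours ?V ?E ?a"
    using link_path_non_neighbour[OF assms] by simp
  then have "vertex_point ?V (link_path (3*m+2) t 1) \<in> realization_set ?V (non_neighbours ?V ?E ?a) ?E"
    by (intro vertex_point_in_realization finite_Gverts G_irrefl) (auto simp: non_neighbours_def)
  then have nonempty: "realization_set ?V (non_neighbours ?V ?E ?a) ?E \<noteq> {}"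
    by blast
  have "indep_space (G (3*m+2) t) = realization ?V ?V ?E"
    by (simp add: indep_space_eq_realization)
  also have "\<dots> homotopy_equivalent_space realization ?V (?V - {?a}) ?E"
    by (rule realization_homotopy_equivalent_delete_vertex[OF finite_Gverts _ _ _
          contractible_link_of_A[OF assms] nonempty])
      (auto simp: Gverts_def G_irrefl)
  also have "realization ?V (?V - {?a}) ?E homotopy_equivalent_space
               indep_space (delete_vertex (G (3*m+2) t) ?a)"
    using homeomorphic_indep_space_delete_vertex[of "G (3*m+2) t" ?a]
    by (simp add: finite_Gverts homeomorphic_imp_homotopy_equivalent_space)
  finally show ?thesis .
qed

end
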